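(* Let $D>0$ and $\ell_0=\sqrt{8Dt}$. The function $$E^{(0)}(x,y,z,t)=\operatorname{erfc}\Bigl(\frac{x}{\ell_0}\Bigr)\operatorname{erfc}\Bigl(\frac{y}{\ell_0}\Bigr)+\operatorname{erfc}\Bigl(\frac{z}{\ell_0}\Bigr)\operatorname{erfc}\Bigl(\frac{x+y+z}{\ell_0}\Bigr)-\operatorname{erfc}\Bigl(\frac{x+z}{\ell_0}\Bigr)\operatorname{erfc}\Bigl(\frac{y+z}{\ell_0}\Bigr)$$ satisfies, for $t>0$, $$\partial_tE=2D\bigl[\partial_x^2+\partial_y^2+\partial_z^2-\partial_x\partial_z-\partial_y\partial_z\bigr]E,$$ together with the consistency conditions $E^{(0)}(x,y,z,t)=E^{(0)}(y,x,z,t)$, $E^{(0)}(x,0,z,t)=\operatorname{erfc}(x/\ell_0)$, $E^{(0)}(0,y,z,t)=\operatorname{erfc}(y/\ell_0)$, $E^{(0)}(x,y,0,t)=\operatorname{erfc}((x+y)/\ell_0)$, and $E^{(0)}(x,y,z,t)\to0$ as $t\to0^+$ for $x,y,z>0$. It is the two-interval probability for an initially fully occupied lattice, and $E^{(0)}(x,y,z,t)\to\operatorname{erfc}(x/\ell_0)\operatorname{erfc}(y/\ell_0)$ as $z\to\infty$.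
   Context: In the continuum limit of the one-dimensional coagulation-diffusion process with diffusion constant $D$, $E(x,y,z,t)$ denotes the probability of two empty intervals of lengths at least $x$ and $y$ separated by distance $z$ at time $t$; for the initially full lattice the single-interval probability is $E(x,t)=\operatorname{erfc}(x/\ell_0)$. *)

theory Defs
  imports "HOL-Analysis.Analysis"
begin

definition erfc :: "real \<Rightarrow> real" where
  "erfc x = 2 / sqrt pi * integral {x..} (\<lambda>s. exp (- (s\<^sup>2)))"

definition ell0 :: "real \<Rightarrow> real \<Rightarrow> real" where
  "ell0 D t = sqrt (8 * D * t)"

definition E0 :: "real \<Rightarrow> real \<Rightarrow> real \<Rightarrow> real \<Rightarrow> real \<Rightarrow> real" where
  "E0 D x y z t =
     erfc (x / ell0 D t) * erfc (y / ell0 D t)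
   + erfc (z / ell0 D t) * erfc ((x + y + z) / ell0 D t)
   - erfc ((x + z) / ell0 D t) * erfc ((y + z) / ell0 D t)"

end

theory Submission imports Defs "HOL-Probability.Probability" begin

(*
  E0 D x y z t is the quadratic expression
      two_interval f x y z = f x * f y + f z * f (x+y+z) - f (x+z) * f (y+z)
  evaluated at the single-interval profile f = (\<lambda>u. erfc (u / ell0 D t)).
  The proof separates three ingredients:
  (1) analytic facts about erfc: erfc 0 = 1, erfc u tends to 0 as u tends to infinity,
      and erfc' u = -2/sqrt pi * exp (-u^2);
  (2) the scaled profile solves the diffusion equation d/dt f = 2D (d/du)^2 f;
  (3) calculus of two_interval for an arbitrary smooth f: the operator
      dxx + dyy + dzz - dxdz - dydz maps two_interval f to its directional
      derivative (as a quadratic form in f) in the direction f'', and the time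
      derivative of two_interval (F t) is its directional derivative in the direction
      d/dt F.
*)

section \<open>The complementary error function\<close>

lemma gaussian_integrable: "integrable lborel (\<lambda>x::real. exp (- x\<^sup>2))"
proof -
  have "has_bochner_integral lborel (\<lambda>x::real. exp (- x\<^sup>2)) (2 * (sqrt pi / 2))"
    using has_bochner_integral_even_function[OF gaussian_moment_0] by simp
  then show ?thesis unfolding integrable.simps by blast
qed

lemma gaussian_set_integrable: "set_integrable lborel {a..} (\<lambda>x::real. exp (- x\<^sup>2))"
  unfolding set_integrable_def by (rule integrable_mult_indicator[OF _ gaussian_integrable]) auto

text \<open>The Henstock-Kurzweil tail integral in the definition of erfc agrees with the
  Lebesgue integral, which gives access to the Gaussian moment and convergence theorems.\<close>
lemma gaussian_tail_integral:
  "integral {a..} (\<lambda>x::real. exp (- x\<^sup>2)) = (\<integral>x. indicator {a..} x *\<^sub>R exp (- x\<^sup>2) \<partial>lborel)"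
  using set_borel_integral_eq_integral(2)[OF gaussian_set_integrable[of a]]
  by (simp add: set_lebesgue_integral_def)

lemma gaussian_tail_has_integral:
  "((\<lambda>x::real. exp (- x\<^sup>2)) has_integral integral {a..} (\<lambda>x::real. exp (- x\<^sup>2))) {a..}"
  using set_borel_integral_eq_integral(1)[OF gaussian_set_integrable[of a]]
  by (simp add: integrable_integral)

text \<open>The normalisation: the Gaussian half-line integral is sqrt pi / 2.\<close>
lemma erfc_0: "erfc 0 = 1"
proof -
  have "(\<integral>x. indicator {0..} x *\<^sub>R exp (- x\<^sup>2) \<partial>lborel) = sqrt pi / 2"
    using gaussian_moment_0 by (simp add: has_bochner_integral_integral_eq)
  then show ?thesis unfolding erfc_def gaussian_tail_integral by simp
qed

text \<open>The Gaussian tail integral vanishes at infinity (dominated convergence).\<close>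
lemma erfc_at_top: "(erfc \<longlongrightarrow> 0) at_top"
proof -
  let ?s = "\<lambda>t x::real. indicator {t..} x *\<^sub>R exp (- x\<^sup>2) :: real"
  have pointwise: "((\<lambda>t. ?s t x) \<longlongrightarrow> 0) at_top" for x
  proof (rule tendsto_eventually)
    show "\<forall>\<^sub>F t in at_top. ?s t x = 0"
      using eventually_gt_at_top[of x] by eventually_elim (auto simp: indicator_def)
  qed
  have "((\<lambda>t. \<integral>x. ?s t x \<partial>lborel) \<longlongrightarrow> (\<integral>x. 0 \<partial>(lborel :: real measure))) at_top"
  proof (rule integral_dominated_convergence_at_top[where w="\<lambda>x. exp (- x\<^sup>2)"])
    show "AE x in lborel. ((\<lambda>t. ?s t x) \<longlongrightarrow> 0) at_top"
      using pointwise by simp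
    show "\<forall>\<^sub>F t in at_top. AE x in lborel. norm (?s t x) \<le> exp (- x\<^sup>2)"
      by (auto simp: indicator_def)
  qed (auto simp: gaussian_integrable)
  then have "((\<lambda>t. 2 / sqrt pi * integral {t..} (\<lambda>x::real. exp (- x\<^sup>2))) \<longlongrightarrow> 2 / sqrt pi * 0) at_top"
    unfolding gaussian_tail_integral by (intro tendsto_mult tendsto_const) simp
  then show ?thesis by (simp add: erfc_def[abs_def])
qed

text \<open>Fundamental theorem of calculus for the tail integral: split {a..} at u.\<close>
lemma erfc_has_derivative: "(erfc has_real_derivative (- 2 / sqrt pi * exp (- x\<^sup>2))) (at x)"
proof -
  let ?g = "\<lambda>x::real. exp (- x\<^sup>2)"
  define a where "a = x - 1"
  have partial: "((\<lambda>u. integral {a..u} ?g) has_real_derivative ?g x) (at x)"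
    using integral_has_real_derivative[of a "x+1" ?g x] at_within_Icc_at[of a x "x+1"]
    by (simp add: a_def continuous_intros)
  have "((\<lambda>u. 2 / sqrt pi * (integral {a..} ?g - integral {a..u} ?g)) has_real_derivative
      (- 2 / sqrt pi * ?g x)) (at x)"
    by (rule derivative_eq_intros partial | simp)+
  then show ?thesis
  proof (rule has_field_derivative_transform_within_open[of _ _ _ "{a<..}"])
    fix u assume u: "u \<in> {a<..}"
    have "(?g has_integral integral {a..u} ?g) {a..u}"
      by (intro integrable_integral integrable_continuous_interval continuous_intros)
    then have "(?g has_integral (integral {a..u} ?g + integral {u..} ?g)) ({a..u} \<union> {u..})"
      by (rule has_integral_Un[OF _ gaussian_tail_has_integral])
         (auto intro: negligible_subset[OF negligible_sing[of u]])
    moreover have "{a..u} \<union> {u..} = {a..}" using u by auto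
    ultimately have "integral {a..} ?g = integral {a..u} ?g + integral {u..} ?g"
      by (simp add: integral_unique)
    then show "2 / sqrt pi * (integral {a..} ?g - integral {a..u} ?g) = erfc u"
      by (simp add: erfc_def)
  qed (auto simp: a_def)
qed

section \<open>The scaled profile erfc (u / l) and the diffusion equation\<close>

definition erfc_scaled' :: "real \<Rightarrow> real \<Rightarrow> real" where
  "erfc_scaled' l u = - (2 / sqrt pi) * exp (- (u / l)\<^sup>2) / l"

definition erfc_scaled'' :: "real \<Rightarrow> real \<Rightarrow> real" where
  "erfc_scaled'' l u = 2 * (2 / sqrt pi) * u * exp (- (u / l)\<^sup>2) / l ^ 3"

lemma erfc_scaled_has_derivative:
  assumes "l \<noteq> 0"
  shows "((\<lambda>u. erfc (u / l)) has_real_derivative erfc_scaled' l u) (at u)"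
proof -
  have "((\<lambda>u. u / l) has_real_derivative 1 / l) (at u)"
    using assms by (auto intro!: derivative_eq_intros)
  from DERIV_chain2[OF erfc_has_derivative this] show ?thesis
    using assms by (simp add: erfc_scaled'_def field_simps)
qed

lemma erfc_scaled'_has_derivative:
  assumes "l \<noteq> 0"
  shows "(erfc_scaled' l has_real_derivative erfc_scaled'' l u) (at u)"
  unfolding erfc_scaled'_def[abs_def] erfc_scaled''_def using assms
  by (auto intro!: derivative_eq_intros simp: field_simps power2_eq_square power3_eq_cube)

lemma erfc_profile_diffusion:
  assumes "D > 0" "t > 0"
  shows "((\<lambda>s. erfc (u / ell0 D s)) has_real_derivative 2 * D * erfc_scaled'' (ell0 D t) u) (at t)"
proof -
  have pos: "8 * D * t > 0" using assms by simp
  define q where "q = sqrt (8 * D * t)"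
  have q: "q > 0" "q\<^sup>2 = 8 * D * t" using pos by (auto simp: q_def)
  have "((\<lambda>s. u / sqrt (8 * D * s)) has_real_derivative - u * (4 * D / q) / q\<^sup>2) (at t)"
    using pos q by (auto intro!: derivative_eq_intros simp: q_def field_simps power2_eq_square)
  from DERIV_chain2[OF erfc_has_derivative this]
  have "((\<lambda>s. erfc (u / sqrt (8 * D * s))) has_real_derivative
     - 2 / sqrt pi * exp (- (u / q)\<^sup>2) * (- u * (4 * D / q) / q\<^sup>2)) (at t)"
    by (simp add: q_def)
  moreover have "- 2 / sqrt pi * exp (- (u / q)\<^sup>2) * (- u * (4 * D / q) / q\<^sup>2)
      = 2 * D * erfc_scaled'' q u"
    using q by (simp add: erfc_scaled''_def field_simps power2_eq_square power3_eq_cube)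
  ultimately show ?thesis
    unfolding ell0_def q_def[symmetric] by simp
qed

text \<open>Initially the lattice is full: for u > 0 the profile vanishes as t tends to 0
  from the right, because ell0 D t tends to 0 and u / ell0 D t to infinity.\<close>
lemma erfc_profile_at_right_0:
  assumes "D > 0" "u > 0"
  shows "((\<lambda>t. erfc (u / ell0 D t)) \<longlongrightarrow> 0) (at_right 0)"
proof -
  have "((\<lambda>t. sqrt (8 * D * t)) \<longlongrightarrow> sqrt (8 * D * 0)) (at_right 0)"
    by (intro tendsto_intros)
  then have "(ell0 D \<longlongrightarrow> 0) (at_right 0)" by (simp add: ell0_def[abs_def])
  moreover have "eventually (\<lambda>t. 0 < ell0 D t) (at_right 0)"
    using eventually_at_right_less[of "0::real"]
    by eventually_elim (use assms in \<open>simp add: ell0_def zero_less_mult_iff\<close>)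
  ultimately have "filterlim (\<lambda>t. u / ell0 D t) at_top (at_right 0)"
    by (rule LIM_at_top_divide[OF tendsto_const \<open>u > 0\<close>])
  from filterlim_compose[OF erfc_at_top this] show ?thesis .
qed

lemma erfc_shifted_at_top:
  assumes "l > 0"
  shows "((\<lambda>z. erfc ((a + z) / l)) \<longlongrightarrow> 0) at_top"
proof -
  have "filterlim (\<lambda>z::real. a + z) at_top at_top"
    by (rule filterlim_tendsto_add_at_top[OF tendsto_const filterlim_ident])
  from filterlim_tendsto_pos_mult_at_top[OF tendsto_const[of "1/l"] _ this] assms
  have "filterlim (\<lambda>z. (a + z) / l) at_top at_top" by (simp add: field_simps)
  from filterlim_compose[OF erfc_at_top this] show ?thesis .
qed

section \<open>The two-interval functional\<close>

text \<open>The quadratic functional building the two-interval probability from a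
  single-interval probability f; E0 is its value at the erfc profile.\<close>
definition two_interval :: "(real \<Rightarrow> real) \<Rightarrow> real \<Rightarrow> real \<Rightarrow> real \<Rightarrow> real" where
  "two_interval f x y z = f x * f y + f z * f (x + y + z) - f (x + z) * f (y + z)"

text \<open>Its derivative (as a function of f) in the direction g.\<close>
definition two_interval_dir :: "(real \<Rightarrow> real) \<Rightarrow> (real \<Rightarrow> real) \<Rightarrow> real \<Rightarrow> real \<Rightarrow> real \<Rightarrow> real" where
  "two_interval_dir f g x y z =
     g x * f y + f x * g y + g z * f (x + y + z) + f z * g (x + y + z)
   - g (x + z) * f (y + z) - f (x + z) * g (y + z)"

lemma E0_two_interval: "E0 D x y z t = two_interval (\<lambda>u. erfc (u / ell0 D t)) x y z"
  by (simp add: E0_def two_interval_def)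

text \<open>The directional derivative is linear in the direction; this pulls out the
  factor 2D of the diffusion equation.\<close>
lemma two_interval_dir_scale:
  "two_interval_dir f (\<lambda>u. c * g u) x y z = c * two_interval_dir f g x y z"
  by (simp add: two_interval_dir_def algebra_simps)

text \<open>The mixed terms 2 f'(z) f'(x+y+z) and 2 f'(x+z) f'(y+z) of dzz are cancelled
  exactly by the two mixed derivatives.\<close>
lemma two_interval_operator:
  assumes f': "\<And>u. (f has_real_derivative f' u) (at u)"
      and f'': "\<And>u. (f' has_real_derivative f'' u) (at u)"
  shows "deriv (\<lambda>a. deriv (\<lambda>b. two_interval f b y z) a) x
       + deriv (\<lambda>a. deriv (\<lambda>b. two_interval f x b z) a) y
       + deriv (\<lambda>a. deriv (\<lambda>b. two_interval f x y b) a) z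
       - deriv (\<lambda>c. deriv (\<lambda>b. two_interval f b y c) x) z
       - deriv (\<lambda>c. deriv (\<lambda>b. two_interval f x b c) y) z
       = two_interval_dir f f'' x y z"
proof -
  note chain [derivative_intros] = DERIV_chain2[OF f'] DERIV_chain2[OF f'']
  have dx: "deriv (\<lambda>b. two_interval f b y z) a
      = f' a * f y + f z * f' (a+y+z) - f' (a+z) * f (y+z)" for a y z
    unfolding two_interval_def
    by (rule DERIV_imp_deriv) (auto intro!: derivative_eq_intros)
  have dy: "deriv (\<lambda>b. two_interval f x b z) a
      = f x * f' a + f z * f' (x+a+z) - f (x+z) * f' (a+z)" for a x z
    unfolding two_interval_def
    by (rule DERIV_imp_deriv) (auto intro!: derivative_eq_intros)
  have dz: "deriv (\<lambda>b. two_interval f x y b) a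
      = f' a * f (x+y+a) + f a * f' (x+y+a) - f' (x+a) * f (y+a) - f (x+a) * f' (y+a)" for a
    unfolding two_interval_def
    by (rule DERIV_imp_deriv) (auto intro!: derivative_eq_intros simp: algebra_simps)
  have dxx: "deriv (\<lambda>a. deriv (\<lambda>b. two_interval f b y z) a) x
      = f'' x * f y + f z * f'' (x+y+z) - f'' (x+z) * f (y+z)"
    unfolding dx by (rule DERIV_imp_deriv) (auto intro!: derivative_eq_intros)
  have dyy: "deriv (\<lambda>a. deriv (\<lambda>b. two_interval f x b z) a) y
      = f x * f'' y + f z * f'' (x+y+z) - f (x+z) * f'' (y+z)"
    unfolding dy by (rule DERIV_imp_deriv) (auto intro!: derivative_eq_intros)
  have dzz: "deriv (\<lambda>a. deriv (\<lambda>b. two_interval f x y b) a) z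
      = f'' z * f (x+y+z) + 2 * f' z * f' (x+y+z) + f z * f'' (x+y+z)
      - f'' (x+z) * f (y+z) - 2 * f' (x+z) * f' (y+z) - f (x+z) * f'' (y+z)"
    unfolding dz by (rule DERIV_imp_deriv) (auto intro!: derivative_eq_intros simp: algebra_simps)
  have dxz: "deriv (\<lambda>c. deriv (\<lambda>b. two_interval f b y c) x) z
      = f' z * f' (x+y+z) + f z * f'' (x+y+z) - f'' (x+z) * f (y+z) - f' (x+z) * f' (y+z)"
    unfolding dx by (rule DERIV_imp_deriv) (auto intro!: derivative_eq_intros simp: algebra_simps)
  have dyz: "deriv (\<lambda>c. deriv (\<lambda>b. two_interval f x b c) y) z
      = f' z * f' (x+y+z) + f z * f'' (x+y+z) - f' (x+z) * f' (y+z) - f (x+z) * f'' (y+z)"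
    unfolding dy by (rule DERIV_imp_deriv) (auto intro!: derivative_eq_intros simp: algebra_simps)
  show ?thesis
    unfolding dxx dyy dzz dxz dyz two_interval_dir_def by (simp add: algebra_simps)
qed

lemma two_interval_time_derivative:
  assumes "\<And>u. ((\<lambda>s. F s u) has_real_derivative G u) (at t)"
  shows "((\<lambda>s. two_interval (F s) x y z) has_real_derivative two_interval_dir (F t) G x y z) (at t)"
  unfolding two_interval_def two_interval_dir_def
  by (auto intro!: derivative_eq_intros assms simp: algebra_simps)

lemma two_interval_swap: "two_interval f x y z = two_interval f y x z"
  by (simp add: two_interval_def algebra_simps)

text \<open>Consistency: an interval of length 0 imposes no constraint (f 0 = 1), and
  two adjacent intervals (z = 0) merge into one.\<close>
lemma two_interval_boundary:
  assumes "f 0 = 1"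
  shows "two_interval f x 0 z = f x" "two_interval f 0 y z = f y" "two_interval f x y 0 = f (x + y)"
  using assms by (simp_all add: two_interval_def algebra_simps)

lemma two_interval_tendsto_0:
  assumes "\<And>u. u > 0 \<Longrightarrow> ((\<lambda>t. F t u) \<longlongrightarrow> 0) L" "x > 0" "y > 0" "z > 0"
  shows "((\<lambda>t. two_interval (F t) x y z) \<longlongrightarrow> 0) L"
proof -
  have "((\<lambda>t. two_interval (F t) x y z) \<longlongrightarrow> 0 * 0 + 0 * 0 - 0 * 0) L"
    unfolding two_interval_def using assms by (intro tendsto_intros assms) auto
  then show ?thesis by simp
qed

lemma two_interval_decouple:
  assumes "\<And>a. ((\<lambda>z. f (a + z)) \<longlongrightarrow> 0) at_top"
  shows "((\<lambda>z. two_interval f x y z) \<longlongrightarrow> f x * f y) at_top"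
proof -
  have "((\<lambda>z. f x * f y + f (0 + z) * f (x + y + z) - f (x + z) * f (y + z))
      \<longlongrightarrow> f x * f y + 0 * 0 - 0 * 0) at_top"
    by (intro tendsto_intros assms)
  then show ?thesis by (simp add: two_interval_def)
qed

text \<open>The diffusion equation for E0: the time derivative is the directional
  derivative in the direction 2D f'' (each factor diffuses), which by the operator
  identity is 2D times the spatial operator applied to E0.\<close>
lemma E0_diffusion_equation:
  assumes "D > 0" "t > 0"
  shows "deriv (\<lambda>s. E0 D x y z s) t =
        2 * D * ( deriv (\<lambda>a. deriv (\<lambda>b. E0 D b y z t) a) x
                + deriv (\<lambda>a. deriv (\<lambda>b. E0 D x b z t) a) y
                + deriv (\<lambda>a. deriv (\<lambda>b. E0 D x y b t) a) z
                - deriv (\<lambda>c. deriv (\<lambda>b. E0 D b y c t) x) z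
                - deriv (\<lambda>c. deriv (\<lambda>b. E0 D x b c t) y) z)"
proof -
  let ?f = "\<lambda>u. erfc (u / ell0 D t)"
  have l: "ell0 D t > 0" using assms by (simp add: ell0_def)
  have "deriv (\<lambda>s. E0 D x y z s) t
      = two_interval_dir ?f (\<lambda>u. 2 * D * erfc_scaled'' (ell0 D t) u) x y z"
    unfolding E0_two_interval
    by (intro DERIV_imp_deriv two_interval_time_derivative erfc_profile_diffusion assms)
  also have "\<dots> = 2 * D * two_interval_dir ?f (erfc_scaled'' (ell0 D t)) x y z"
    by (rule two_interval_dir_scale)
  finally show ?thesis
    unfolding E0_two_interval
    using two_interval_operator[OF erfc_scaled_has_derivative erfc_scaled'_has_derivative] l
    by simp
qed

theorem mainTheorem7:
  fixes D :: real
  assumes "D > 0"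
  shows
    "(\<forall>x y z t. t > 0 \<longrightarrow>
        deriv (\<lambda>s. E0 D x y z s) t =
        2 * D * ( deriv (\<lambda>a. deriv (\<lambda>b. E0 D b y z t) a) x
                + deriv (\<lambda>a. deriv (\<lambda>b. E0 D x b z t) a) y
                + deriv (\<lambda>a. deriv (\<lambda>b. E0 D x y b t) a) z
                - deriv (\<lambda>c. deriv (\<lambda>b. E0 D b y c t) x) z
                - deriv (\<lambda>c. deriv (\<lambda>b. E0 D x b c t) y) z))
   \<and> (\<forall>x y z t. t > 0 \<longrightarrow> E0 D x y z t = E0 D y x z t)
   \<and> (\<forall>x z t. t > 0 \<longrightarrow> E0 D x 0 z t = erfc (x / ell0 D t))
   \<and> (\<forall>y z t. t > 0 \<longrightarrow> E0 D 0 y z t = erfc (y / ell0 D t))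
   \<and> (\<forall>x y t. t > 0 \<longrightarrow> E0 D x y 0 t = erfc ((x + y) / ell0 D t))
   \<and> (\<forall>x y z. x > 0 \<and> y > 0 \<and> z > 0 \<longrightarrow>
        ((\<lambda>t. E0 D x y z t) \<longlongrightarrow> 0) (at_right 0))
   \<and> (\<forall>x y t. t > 0 \<longrightarrow>
        ((\<lambda>z. E0 D x y z t) \<longlongrightarrow> erfc (x / ell0 D t) * erfc (y / ell0 D t)) at_top)"
proof (intro conjI allI impI E0_diffusion_equation[OF assms])
  show "E0 D x y z t = E0 D y x z t" for x y z t
    unfolding E0_two_interval by (rule two_interval_swap)
next
  show "E0 D x 0 z t = erfc (x / ell0 D t)" "E0 D 0 y z t = erfc (y / ell0 D t)"
    "E0 D x y 0 t = erfc ((x + y) / ell0 D t)" for x y z t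
    unfolding E0_two_interval by (simp_all add: two_interval_boundary erfc_0)
next
  fix x y z :: real
  assume "x > 0 \<and> y > 0 \<and> z > 0"
  then show "((\<lambda>t. E0 D x y z t) \<longlongrightarrow> 0) (at_right 0)"
    unfolding E0_two_interval
    by (intro two_interval_tendsto_0 erfc_profile_at_right_0 assms) auto
next
  fix x y t :: real
  assume "t > 0"
  then have "ell0 D t > 0" using assms by (simp add: ell0_def)
  then show "((\<lambda>z. E0 D x y z t) \<longlongrightarrow> erfc (x / ell0 D t) * erfc (y / ell0 D t)) at_top"
    unfolding E0_two_interval by (intro two_interval_decouple erfc_shifted_at_top)
qed

end
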